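(* Let $G$ be a finite group and let $r\geq 2$ be a prime with $\gcd(r,|G|)=1$. Then $P_r(G\wr S_{n+1})=P_r(G\wr S_n)$ for every $n\in\mathbb{N}$ with $n\not\equiv -1 \pmod r$. Equivalently, $|\omega_r(G\wr S_{n+1})|=|G|(n+1)\,|\omega_r(G\wr S_n)|$ for every such $n$.
   Context: For a finite group $G$, the wreath product $G\wr S_n$ is the set of pairs $(f,\pi)$ with $f:\{1,\dots,n\}\to G$ any function and $\pi\in S_n$, with multiplication $(f,\pi)(f',\pi')=(f f'_{\pi},\pi\pi')$, where $f'_\pi(i)=f'(\pi^{-1}(i))$ and functions are multiplied pointwise; it has order $|G|^n n!$. The power map $\omega_r:G\wr S_n\to G\wr S_n$ is $x\mapsto x^r$, $\omega_r(G\wr S_n)$ denotes its image (the set of $r$-th powers), and $P_r(G\wr S_n)=\frac{|\omega_r(G\wr S_n)|}{|G|^n n!}$. *)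

theory Defs
  imports Complex_Main "HOL-Algebra.Group" "HOL-Library.FuncSet" "HOL-Combinatorics.Permutations"
    "HOL-Computational_Algebra.Primes" "HOL-Number_Theory.Cong"
begin

text \<open>Elements are pairs (f, p) with f : {0..<n} -> carrier G (extensional) and p a
  permutation of {0..<n}; (f,p)(f',p') = (f * f'_p, p o p') with f'_p i = f' (p^-1 i).\<close>

definition wreath :: "('a, 'b) monoid_scheme \<Rightarrow> nat \<Rightarrow> ((nat \<Rightarrow> 'a) \<times> (nat \<Rightarrow> nat)) monoid" where
  "wreath G n = \<lparr> carrier = {(f, p). f \<in> {0..<n} \<rightarrow>\<^sub>E carrier G \<and> p permutes {0..<n}},
     monoid.mult = (\<lambda>(f, p) (f', p'). ((\<lambda>i\<in>{0..<n}. f i \<otimes>\<^bsub>G\<^esub> f' (inv_into UNIV p i)), p \<circ> p')),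
     one = ((\<lambda>i\<in>{0..<n}. \<one>\<^bsub>G\<^esub>), id) \<rparr>"

definition power_image :: "('c, 'd) monoid_scheme \<Rightarrow> nat \<Rightarrow> 'c set" where
  "power_image H r = (\<lambda>x. x [^]\<^bsub>H\<^esub> r) ` carrier H"

definition P_r :: "('a, 'b) monoid_scheme \<Rightarrow> nat \<Rightarrow> nat \<Rightarrow> real" where
  "P_r G r n = real (card (power_image (wreath G n) r)) /
               (real (card (carrier G)) ^ n * real (fact n))"

end

theory Submission
  imports Defs "HOL-Combinatorics.Cycles" "HOL-Combinatorics.Orbits" "HOL-Algebra.Multiplicative_Group"
begin

text \<open>
  For x = (f, s) in G wr S_B let T be the set of points lying on cycles of s of length divisible
  by r. If x = y^r with y = (g, t), then s = t^r and T is the union of the cycles of t of length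
  divisible by r^2; hence T is t-invariant and the restriction of x to T is an r-th power.
  Conversely, on B - T all cycle lengths, and therefore (as r does not divide |G|) the order of
  the restriction of x, are prime to r, so that restriction is always an r-th power. Thus x is an
  r-th power iff its restriction to T is one, and

    |omega_r(G wr S_B)| = sum over T in Pow B of  d(T) * |G|^|B - T| * rho(|B - T|),

  where d(T) counts the r-th powers on T all of whose cycle lengths are divisible by r (so
  d(T) = 0 unless r divides |T|) and rho(m) counts the permutations of m points without cycles of
  length divisible by r. Removing the cycle through a fixed point gives a recurrence for rho
  which implies rho(m) = m * rho(m - 1) whenever r does not divide m. If r does not divide n + 1,
  then r does not divide |B - T| in any nonzero term, which therefore equals |G| * |B - T| times
  the corresponding term for a set of n points; counting the pairs (T, j) with j in B - T gives
  |omega_r(G wr S_(n+1))| = |G| * (n + 1) * |omega_r(G wr S_n)|.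
\<close>

section \<open>Cycle lengths of permutations\<close>

lemma nat_dvd_iff_imp_eq: "(\<And>n. (d::nat) dvd n \<longleftrightarrow> e dvd n) \<Longrightarrow> d = e"
  by (meson dvd_antisym dvd_refl)

lemma least_power_funpow_apply:
  assumes "permutation p"
  shows "least_power p ((p ^^ k) i) = least_power p i"
proof (rule nat_dvd_iff_imp_eq)
  fix n
  have "(p ^^ n) \<circ> (p ^^ k) = (p ^^ k) \<circ> (p ^^ n)"
    by (metis funpow_add add.commute)
  then have "(p ^^ n) ((p ^^ k) i) = (p ^^ k) ((p ^^ n) i)"
    by (metis comp_apply)
  moreover have "inj (p ^^ k)"
    using assms by (simp add: bij_is_inj permutation_bijective bij_fn)
  ultimately have "(p ^^ n) ((p ^^ k) i) = (p ^^ k) i \<longleftrightarrow> (p ^^ n) i = i"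
    by (simp add: inj_eq)
  then show "least_power p ((p ^^ k) i) dvd n \<longleftrightarrow> least_power p i dvd n"
    using assms by (simp only: least_power_dvd)
qed

lemma least_power_apply: "permutation p \<Longrightarrow> least_power p (p i) = least_power p i"
  using least_power_funpow_apply[of p 1 i] by simp

lemma least_power_funpow_prime:
  assumes p: "permutation p" and r: "prime r"
  shows "least_power (p ^^ r) i
    = (if r dvd least_power p i then least_power p i div r else least_power p i)"
proof -
  have pr: "permutation (p ^^ r)" using p by (rule permutation_funpow)
  have dvd_iff: "least_power (p ^^ r) i dvd n \<longleftrightarrow> least_power p i dvd r * n" for n
    using p pr by (simp add: least_power_dvd funpow_mult)
  show ?thesis
  proof (cases "r dvd least_power p i")
    case True
    then obtain m where m: "least_power p i = r * m" by blast
    have "least_power (p ^^ r) i = m"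
      using r by (intro nat_dvd_iff_imp_eq) (simp add: dvd_iff m prime_gt_0_nat)
    moreover have "r > 0" using r by (simp add: prime_gt_0_nat)
    ultimately show ?thesis using True m by simp
  next
    case False
    then have "coprime (least_power p i) r"
      using r by (metis coprime_commute prime_imp_coprime_nat)
    then have "least_power (p ^^ r) i = least_power p i"
      by (intro nat_dvd_iff_imp_eq) (simp add: dvd_iff coprime_dvd_mult_right_iff)
    then show ?thesis using False by simp
  qed
qed

lemma prime_dvd_least_power_funpow_iff:
  assumes "permutation p" "prime r"
  shows "r dvd least_power (p ^^ r) i \<longleftrightarrow> r * r dvd least_power p i"
  using least_power_funpow_prime[OF assms, of i] assms(2)
  by (cases "r dvd least_power p i") (auto simp: prime_gt_0_nat dest: dvd_mult_left)

lemma permutes_image_eq_if_subset: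
  "p permutes B \<Longrightarrow> finite A \<Longrightarrow> p ` A \<subseteq> A \<Longrightarrow> p ` A = A"
  by (meson endo_inj_surj permutes_inj inj_on_subset subset_UNIV)

lemma permutes_image_Diff: "p permutes B \<Longrightarrow> p ` A = A \<Longrightarrow> p ` (B - A) = B - A"
  by (metis image_set_diff permutes_image permutes_inj)

lemma funpow_image_eq: "p ` A = A \<Longrightarrow> (p ^^ n) ` A = A"
proof (induction n)
  case (Suc n)
  have "(p ^^ Suc n) ` A = p ` ((p ^^ n) ` A)" by (simp add: image_comp)
  then show ?case using Suc by (simp only:)
qed simp

lemma permutes_image_least_power_Collect:
  assumes "p permutes B" "finite B"
  shows "p ` {i\<in>B. P (least_power p i)} = {i\<in>B. P (least_power p i)}"
proof (rule permutes_image_eq_if_subset[OF assms(1)])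
  have "permutation p" using assms permutation_permutes by blast
  then show "p ` {i\<in>B. P (least_power p i)} \<subseteq> {i\<in>B. P (least_power p i)}"
    using assms(1) least_power_apply by (fastforce simp: permutes_in_image)
qed (use assms in simp)

lemma funpow_perm_restrict:
  assumes "p ` A \<subseteq> A" "i \<in> A"
  shows "(perm_restrict p A ^^ n) i = (p ^^ n) i \<and> (p ^^ n) i \<in> A"
  using assms by (induction n) (auto simp: perm_restrict_simps)

lemma least_power_perm_restrict:
  assumes "p ` A \<subseteq> A" "i \<in> A"
  shows "least_power (perm_restrict p A) i = least_power p i"
  unfolding least_power_def using funpow_perm_restrict[OF assms] by simp

lemma perm_restrict_permutes:
  assumes "p permutes B" "p ` A = A"
  shows "perm_restrict p A permutes A"
proof (rule bij_imp_permutes)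
  have "inj_on p A" using assms(1) by (meson permutes_inj inj_on_subset subset_UNIV)
  then have "bij_betw p A A" using assms(2) by (simp add: bij_betw_def)
  moreover have "bij_betw (perm_restrict p A) A A \<longleftrightarrow> bij_betw p A A"
    by (rule bij_betw_cong) (simp add: perm_restrict_simps)
  ultimately show "bij_betw (perm_restrict p A) A A" by simp
qed (simp add: perm_restrict_simps)

lemma inv_into_perm_restrict:
  assumes "p permutes B" "p ` A = A" "i \<in> A"
  shows "inv_into UNIV (perm_restrict p A) i = inv_into UNIV p i"
proof -
  have "i \<in> p ` A" using assms(2,3) by simp
  then obtain j where j: "j \<in> A" "p j = i" by blast
  have "inv_into UNIV (perm_restrict p A) (perm_restrict p A j) = j"
    using perm_restrict_permutes[OF assms(1,2)] by (rule permutes_inverses(2))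
  then have "inv_into UNIV (perm_restrict p A) i = j"
    using j by (simp only: perm_restrict_simps)
  moreover have "inv_into UNIV p (p j) = j" using assms(1) by (rule permutes_inverses(2))
  ultimately show ?thesis using j(2) by simp
qed

lemma perm_restrict_comp_invariant:
  "q ` A \<subseteq> A \<Longrightarrow> perm_restrict (p \<circ> q) A = perm_restrict p A \<circ> perm_restrict q A"
  by (auto simp: perm_restrict_def fun_eq_iff)

lemma inv_into_permutes_in: "p permutes A \<Longrightarrow> i \<in> A \<Longrightarrow> inv_into UNIV p i \<in> A"
  by (simp add: permutes_inv permutes_in_image)

lemma comp_disjoint_permutes_apply:
  assumes p: "p permutes A" and q: "q permutes C" and "A \<inter> C = {}"
  shows "i \<in> A \<Longrightarrow> (p \<circ> q) i = p i" and "i \<in> C \<Longrightarrow> (p \<circ> q) i = q i"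
proof -
  show "(p \<circ> q) i = p i" if "i \<in> A"
  proof -
    have "i \<notin> C" using that assms(3) by blast
    then show ?thesis using permutes_not_in[OF q] by simp
  qed
  assume "i \<in> C"
  then have "q i \<notin> A" using q assms(3) by (auto simp: permutes_in_image)
  then show "(p \<circ> q) i = q i" using permutes_not_in[OF p] by simp
qed

lemma
  assumes "p permutes A" "q permutes C" "A \<inter> C = {}"
  shows comp_disjoint_permutes_image_left: "(p \<circ> q) ` A = A"
    and comp_disjoint_permutes_image_right: "(p \<circ> q) ` C = C"
    and perm_restrict_comp_disjoint_left: "perm_restrict (p \<circ> q) A = p"
    and perm_restrict_comp_disjoint_right: "perm_restrict (p \<circ> q) C = q"
proof -
  note eq = comp_disjoint_permutes_apply[OF assms]
  show "(p \<circ> q) ` A = A"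
    using eq(1) permutes_image[OF assms(1)] by (metis image_cong)
  show "(p \<circ> q) ` C = C"
    using eq(2) permutes_image[OF assms(2)] by (metis image_cong)
  show "perm_restrict (p \<circ> q) A = p" "perm_restrict (p \<circ> q) C = q"
    using eq assms(1,2) by (auto simp: perm_restrict_def fun_eq_iff permutes_not_in)
qed

lemma least_power_comp_disjoint:
  assumes "p permutes A" "q permutes C" "A \<inter> C = {}"
  shows "i \<in> A \<Longrightarrow> least_power (p \<circ> q) i = least_power p i"
    and "i \<in> C \<Longrightarrow> least_power (p \<circ> q) i = least_power q i"
proof -
  assume "i \<in> A"
  have "least_power (perm_restrict (p \<circ> q) A) i = least_power (p \<circ> q) i"
    by (rule least_power_perm_restrict[OF equalityD1[OF comp_disjoint_permutes_image_left[OF assms]]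
          \<open>i \<in> A\<close>])
  then show "least_power (p \<circ> q) i = least_power p i"
    unfolding perm_restrict_comp_disjoint_left[OF assms] by (rule sym)
next
  assume "i \<in> C"
  have "least_power (perm_restrict (p \<circ> q) C) i = least_power (p \<circ> q) i"
    by (rule least_power_perm_restrict[OF equalityD1[OF comp_disjoint_permutes_image_right[OF assms]]
          \<open>i \<in> C\<close>])
  then show "least_power (p \<circ> q) i = least_power q i"
    unfolding perm_restrict_comp_disjoint_right[OF assms] by (rule sym)
qed

lemma support_cong: "(\<And>n. (p ^^ n) a = (q ^^ n) a) \<Longrightarrow> support p a = support q a"
  unfolding least_power_def by simp

lemma funpow_cycle_of_list_hd:
  assumes "distinct cs" "cs \<noteq> []"
  shows "(cycle_of_list cs ^^ n) (hd cs) = cs ! (n mod length cs)"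
proof -
  have "map (cycle_of_list cs ^^ n) cs = rotate n cs" by (rule cyclic_rotation[OF assms(1)])
  then have "(map (cycle_of_list cs ^^ n) cs) ! 0 = rotate n cs ! 0" by simp
  then show ?thesis using assms(2) by (simp add: nth_rotate hd_conv_nth)
qed

lemma least_power_cycle_of_list_hd:
  assumes d: "distinct (a # s)"
  shows "least_power (cycle_of_list (a # s)) a = Suc (length s)"
proof (rule nat_dvd_iff_imp_eq)
  fix n
  have "least_power (cycle_of_list (a # s)) a dvd n \<longleftrightarrow> (cycle_of_list (a # s) ^^ n) a = a"
    by (rule least_power_dvd[OF permutation_of_cycle])
  also have "\<dots> \<longleftrightarrow> (a # s) ! (n mod Suc (length s)) = (a # s) ! 0"
    using funpow_cycle_of_list_hd[OF d, of n] by simp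
  also have "\<dots> \<longleftrightarrow> n mod Suc (length s) = 0"
    using nth_eq_iff_index_eq[OF d, of "n mod Suc (length s)" 0] by simp
  finally show "least_power (cycle_of_list (a # s)) a dvd n \<longleftrightarrow> Suc (length s) dvd n"
    by (simp add: dvd_eq_mod_eq_0)
qed

lemma least_power_cycle_of_list:
  assumes d: "distinct (a # s)" and i: "i \<in> set (a # s)"
  shows "least_power (cycle_of_list (a # s)) i = Suc (length s)"
proof -
  obtain k where "k < Suc (length s)" "(a # s) ! k = i" using i by (metis in_set_conv_nth length_Cons)
  then have "(cycle_of_list (a # s) ^^ k) a = i" using funpow_cycle_of_list_hd[OF d, of k] by simp
  then show ?thesis
    using least_power_funpow_apply[OF permutation_of_cycle, of "a # s" k a]
      least_power_cycle_of_list_hd[OF d] by simp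
qed

lemma support_cycle_of_list:
  assumes d: "distinct (a # s)"
  shows "support (cycle_of_list (a # s)) a = a # s"
proof -
  have "support (cycle_of_list (a # s)) a = map (\<lambda>i. (a # s) ! i) [0..<length (a # s)]"
    using funpow_cycle_of_list_hd[OF d] least_power_cycle_of_list_hd[OF d] by simp
  then show ?thesis by (simp only: map_nth)
qed

lemma
  assumes d: "distinct (a # s)" and q: "q permutes X" and disj: "set (a # s) \<inter> X = {}"
  shows cycle_of_list_comp_permutes: "cycle_of_list (a # s) \<circ> q permutes set (a # s) \<union> X"
    and least_power_cycle_of_list_comp_cycle:
      "i \<in> set (a # s) \<Longrightarrow> least_power (cycle_of_list (a # s) \<circ> q) i = Suc (length s)"
    and least_power_cycle_of_list_comp_rest:
      "i \<in> X \<Longrightarrow> least_power (cycle_of_list (a # s) \<circ> q) i = least_power q i"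
    and support_cycle_of_list_comp: "support (cycle_of_list (a # s) \<circ> q) a = a # s"
    and perm_restrict_cycle_of_list_comp: "perm_restrict (cycle_of_list (a # s) \<circ> q) X = q"
proof -
  note cyc = cycle_permutes[of "a # s"]
  show "cycle_of_list (a # s) \<circ> q permutes set (a # s) \<union> X"
    using cyc q by (metis permutes_compose permutes_subset sup_ge1 sup_ge2)
  show "least_power (cycle_of_list (a # s) \<circ> q) i = Suc (length s)" if "i \<in> set (a # s)"
    using least_power_comp_disjoint(1)[OF cyc q disj that] least_power_cycle_of_list[OF d that]
    by simp
  show "least_power (cycle_of_list (a # s) \<circ> q) i = least_power q i" if "i \<in> X"
    using least_power_comp_disjoint(2)[OF cyc q disj that] .
  show "perm_restrict (cycle_of_list (a # s) \<circ> q) X = q"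
    by (rule perm_restrict_comp_disjoint_right[OF cyc q disj])
  have "(cycle_of_list (a # s) ^^ n) a = ((cycle_of_list (a # s) \<circ> q) ^^ n) a" for n
    using funpow_perm_restrict[OF equalityD1[OF comp_disjoint_permutes_image_left[OF cyc q disj]],
        of a n]
    unfolding perm_restrict_comp_disjoint_left[OF cyc q disj] by simp
  then have "support (cycle_of_list (a # s) \<circ> q) a = support (cycle_of_list (a # s)) a"
    by (intro support_cong) simp
  then show "support (cycle_of_list (a # s) \<circ> q) a = a # s"
    by (simp add: support_cycle_of_list[OF d])
qed

lemma
  assumes p: "p permutes C" and C: "finite C" and a: "a \<in> C"
  shows support_Cons_tl: "support p a = a # tl (support p a)"
    and distinct_support: "distinct (support p a)"
    and set_support_subset: "set (support p a) \<subseteq> C"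
    and permutes_image_set_support: "p ` set (support p a) = set (support p a)"
    and permutes_eq_cycle_of_support_comp:
      "p = cycle_of_list (support p a) \<circ> perm_restrict p (C - set (support p a))"
proof -
  define cs where "cs = support p a"
  have perm: "permutation p" using p C permutation_permutes by blast
  show "support p a = a # tl (support p a)"
    using least_power_of_permutation(2)[OF perm, of a] by (simp add: upt_conv_Cons)
  show "distinct (support p a)" by (rule cycle_of_permutation[OF perm])
  have "(p ^^ n) a \<in> C" for n using a p by (induction n) (simp_all add: permutes_in_image)
  then show "set (support p a) \<subseteq> C" by auto
  have "p ((p ^^ n) a) \<in> range (\<lambda>i. (p ^^ i) a)" for n
    using rangeI[of "\<lambda>i. (p ^^ i) a" "Suc n"] by simp
  then have "p ` set cs \<subseteq> set cs"
    unfolding cs_def support_set[OF perm] by auto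
  then have inv: "p ` set cs = set cs" using permutes_image_eq_if_subset[OF p] by simp
  then show "p ` set (support p a) = set (support p a)" by (simp add: cs_def)
  have inv': "p ` (C - set cs) = C - set cs" by (rule permutes_image_Diff[OF p inv])
  show "p = cycle_of_list (support p a) \<circ> perm_restrict p (C - set (support p a))"
    unfolding cs_def[symmetric]
  proof
    fix i
    consider "i \<in> set cs" | "i \<in> C - set cs" | "i \<notin> C" "i \<notin> set cs" by blast
    then show "p i = (cycle_of_list cs \<circ> perm_restrict p (C - set cs)) i"
    proof cases
      case 1
      then show ?thesis using cycle_restrict[OF perm, of i a] by (simp add: perm_restrict_simps cs_def)
    next
      case 2
      then have "p i \<notin> set cs" using inv' by blast
      then show ?thesis using 2 by (simp add: perm_restrict_simps id_outside_supp)
    next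
      case 3
      then show ?thesis using p by (simp add: perm_restrict_simps id_outside_supp permutes_not_in)
    qed
  qed
qed

lemma funpow_prod_least_power_eq_id:
  assumes p: "p permutes C" and C: "finite C"
  shows "p ^^ (\<Prod>i\<in>C. least_power p i) = id"
proof
  fix i
  have perm: "permutation p" using p C permutation_permutes by blast
  show "(p ^^ (\<Prod>i\<in>C. least_power p i)) i = id i"
  proof (cases "i \<in> C")
    case True
    then have "least_power p i dvd (\<Prod>i\<in>C. least_power p i)" using C by (simp add: dvd_prodI)
    then show ?thesis using perm by (simp add: least_power_dvd)
  next
    case False
    then show ?thesis using permutes_not_in[OF permutes_funpow[OF p] False] by simp
  qed
qed

lemma dvd_card_if_dvd_least_power:
  assumes "finite T" "p permutes T" "\<forall>i\<in>T. r dvd least_power p i"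
  shows "r dvd card T"
  using assms
proof (induction "card T" arbitrary: T p rule: less_induct)
  case less
  show ?case
  proof (cases "T = {}")
    case False
    then obtain a where a: "a \<in> T" by blast
    define S where "S = set (support p a)"
    have "a \<in> S" using support_Cons_tl[OF less.prems(2,1) a] unfolding S_def
      by (metis list.set_intros(1))
    have S: "S \<subseteq> T" "p ` S = S" and "card S = least_power p a"
      using set_support_subset[OF less.prems(2,1) a] permutes_image_set_support[OF less.prems(2,1) a]
        distinct_card[OF distinct_support[OF less.prems(2,1) a]] by (simp_all add: S_def)
    then have "r dvd card S" using less.prems(3) a by simp
    have inv: "p ` (T - S) = T - S" by (rule permutes_image_Diff[OF less.prems(2) S(2)])
    have "r dvd card (T - S)"
    proof (rule less.hyps)
      show "card (T - S) < card T"
        using \<open>a \<in> S\<close> a less.prems(1) by (intro psubset_card_mono) auto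
      show "perm_restrict p (T - S) permutes T - S" by (rule perm_restrict_permutes[OF less.prems(2) inv])
      show "\<forall>i\<in>T - S. r dvd least_power (perm_restrict p (T - S)) i"
        using less.prems(3) inv by (simp add: least_power_perm_restrict)
    qed (use less.prems(1) in simp)
    moreover have "card T = card S + card (T - S)"
      using less.prems(1) S(1) by (simp add: card_Diff_subset card_mono finite_subset)
    ultimately show ?thesis using \<open>r dvd card S\<close> by simp
  qed simp
qed

definition dvd_cycle_points :: "nat \<Rightarrow> ('i \<Rightarrow> 'i) \<Rightarrow> 'i set \<Rightarrow> 'i set" where
  "dvd_cycle_points r p B = {i\<in>B. r dvd least_power p i}"

lemma dvd_cycle_points_subset: "dvd_cycle_points r p B \<subseteq> B"
  by (auto simp: dvd_cycle_points_def)

lemma permutes_image_dvd_cycle_points: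
  "p permutes B \<Longrightarrow> finite B \<Longrightarrow> p ` dvd_cycle_points r p B = dvd_cycle_points r p B"
  unfolding dvd_cycle_points_def by (rule permutes_image_least_power_Collect)

section \<open>Permutations without cycles of length divisible by r\<close>

definition r_regular_perms :: "nat \<Rightarrow> 'i set \<Rightarrow> ('i \<Rightarrow> 'i) set" where
  "r_regular_perms r C = {p. p permutes C \<and> (\<forall>i\<in>C. \<not> r dvd least_power p i)}"

lemma finite_r_regular_perms: "finite C \<Longrightarrow> finite (r_regular_perms r C)"
  by (rule finite_subset[OF _ finite_permutations[of C]]) (auto simp: r_regular_perms_def)

lemma cycle_of_list_comp_in_r_regular_perms:
  assumes a: "a \<in> C" and s: "distinct s" "set s \<subseteq> C - {a}" "\<not> r dvd Suc (length s)"
    and q: "q \<in> r_regular_perms r (C - set (a # s))"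
  shows "cycle_of_list (a # s) \<circ> q \<in> r_regular_perms r C"
proof -
  have d: "distinct (a # s)" using s by auto
  have qp: "q permutes C - set (a # s)" using q by (simp add: r_regular_perms_def)
  have disj: "set (a # s) \<inter> (C - set (a # s)) = {}" by blast
  have U: "set (a # s) \<union> (C - set (a # s)) = C" using a s by auto
  have "\<not> r dvd least_power (cycle_of_list (a # s) \<circ> q) i" if "i \<in> C" for i
  proof (cases "i \<in> set (a # s)")
    case True
    then show ?thesis using least_power_cycle_of_list_comp_cycle[OF d qp disj] s(3) by simp
  next
    case False
    then show ?thesis
      using least_power_cycle_of_list_comp_rest[OF d qp disj] q that
      by (simp add: r_regular_perms_def)
  qed
  moreover have "cycle_of_list (a # s) \<circ> q permutes C"
    using cycle_of_list_comp_permutes[OF d qp disj] unfolding U .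
  ultimately show ?thesis by (simp add: r_regular_perms_def)
qed

lemma r_regular_perms_decompose:
  assumes C: "finite C" and a: "a \<in> C"
  shows "r_regular_perms r C = (\<Union>s\<in>{s. distinct s \<and> set s \<subseteq> C - {a} \<and> \<not> r dvd Suc (length s)}.
    (\<lambda>q. cycle_of_list (a # s) \<circ> q) ` r_regular_perms r (C - set (a # s)))" (is "_ = ?U")
proof
  show "r_regular_perms r C \<subseteq> ?U"
  proof
    fix p assume "p \<in> r_regular_perms r C"
    then have p: "p permutes C" and nd: "\<forall>i\<in>C. \<not> r dvd least_power p i"
      by (simp_all add: r_regular_perms_def)
    define s where "s = tl (support p a)"
    have cs: "support p a = a # s" using support_Cons_tl[OF p C a] by (simp add: s_def)
    define q where "q = perm_restrict p (C - set (a # s))"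
    have inv: "p ` (C - set (a # s)) = C - set (a # s)"
      using permutes_image_Diff[OF p permutes_image_set_support[OF p C a]] cs by simp
    have "distinct (a # s)" "set (a # s) \<subseteq> C"
      using distinct_support[OF p C a] set_support_subset[OF p C a] cs by simp_all
    moreover have "\<not> r dvd Suc (length s)"
      using nd a arg_cong[OF cs, of length] by force
    ultimately have s: "s \<in> {s. distinct s \<and> set s \<subseteq> C - {a} \<and> \<not> r dvd Suc (length s)}"
      by auto
    have "q permutes C - set (a # s)" unfolding q_def by (rule perm_restrict_permutes[OF p inv])
    moreover have "least_power q i = least_power p i" if "i \<in> C - set (a # s)" for i
      unfolding q_def using inv that by (simp add: least_power_perm_restrict)
    ultimately have "q \<in> r_regular_perms r (C - set (a # s))"
      using nd by (simp add: r_regular_perms_def)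
    moreover have "p = cycle_of_list (a # s) \<circ> q"
      using permutes_eq_cycle_of_support_comp[OF p C a] cs by (simp add: q_def)
    ultimately show "p \<in> ?U" using s by blast
  qed
  show "?U \<subseteq> r_regular_perms r C"
  proof clarify
    fix s q
    assume "distinct s" "set s \<subseteq> C - {a}" "\<not> r dvd Suc (length s)"
      and "q \<in> r_regular_perms r (C - set (a # s))"
    then show "cycle_of_list (a # s) \<circ> q \<in> r_regular_perms r C"
      by (rule cycle_of_list_comp_in_r_regular_perms[OF a])
  qed
qed

lemma card_r_regular_perms_decompose:
  assumes C: "finite C" and a: "a \<in> C"
  shows "card (r_regular_perms r C) = (\<Sum>s\<in>{s. distinct s \<and> set s \<subseteq> C - {a} \<and> \<not> r dvd Suc (length s)}.
    card (r_regular_perms r (C - set (a # s))))"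
proof -
  define L where "L = {s. distinct s \<and> set s \<subseteq> C - {a} \<and> \<not> r dvd Suc (length s)}"
  define F where "F s q = cycle_of_list (a # s) \<circ> q" for s and q :: "'a \<Rightarrow> 'a"
  have F_inj: "support (F s q) a = a # s" "perm_restrict (F s q) (C - set (a # s)) = q"
    if "s \<in> L" "q \<in> r_regular_perms r (C - set (a # s))" for s q
  proof -
    have "distinct (a # s)" using that by (auto simp: L_def)
    moreover have "q permutes C - set (a # s)" using that by (simp add: r_regular_perms_def)
    ultimately show "support (F s q) a = a # s" "perm_restrict (F s q) (C - set (a # s)) = q"
      unfolding F_def
      by (simp_all add: support_cycle_of_list_comp perm_restrict_cycle_of_list_comp Int_Diff)
  qed
  have "card (r_regular_perms r C) = card (\<Union>s\<in>L. F s ` r_regular_perms r (C - set (a # s)))"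
    using r_regular_perms_decompose[OF C a, of r] by (simp add: L_def F_def)
  also have "\<dots> = (\<Sum>s\<in>L. card (F s ` r_regular_perms r (C - set (a # s))))"
  proof (rule card_UN_disjoint)
    show "finite L" unfolding L_def
      by (rule finite_subset[OF _ finite_subset_distinct[OF finite_Diff[OF C]]]) blast
    show "\<forall>s\<in>L. finite (F s ` r_regular_perms r (C - set (a # s)))"
      using C by (simp add: finite_r_regular_perms)
    show "\<forall>s\<in>L. \<forall>s'\<in>L. s \<noteq> s' \<longrightarrow>
        F s ` r_regular_perms r (C - set (a # s)) \<inter> F s' ` r_regular_perms r (C - set (a # s')) = {}"
    proof (intro ballI impI)
      fix s s' assume "s \<in> L" "s' \<in> L" "s \<noteq> s'"
      show "F s ` r_regular_perms r (C - set (a # s)) \<inter> F s' ` r_regular_perms r (C - set (a # s')) = {}"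
      proof (rule ccontr)
        assume "F s ` r_regular_perms r (C - set (a # s)) \<inter> F s' ` r_regular_perms r (C - set (a # s')) \<noteq> {}"
        then obtain q q' where q: "q \<in> r_regular_perms r (C - set (a # s))"
          and q': "q' \<in> r_regular_perms r (C - set (a # s'))" and eq: "F s q = F s' q'" by blast
        have "a # s = a # s'"
          using F_inj(1)[OF \<open>s \<in> L\<close> q] F_inj(1)[OF \<open>s' \<in> L\<close> q'] eq by simp
        then show False using \<open>s \<noteq> s'\<close> by simp
      qed
    qed
  qed
  also have "\<dots> = (\<Sum>s\<in>L. card (r_regular_perms r (C - set (a # s))))"
  proof (rule sum.cong[OF refl], rule card_image, rule inj_onI)
    fix s q q' assume "s \<in> L" "q \<in> r_regular_perms r (C - set (a # s))"
      "q' \<in> r_regular_perms r (C - set (a # s))" "F s q = F s q'"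
    then show "q = q'" using F_inj(2) by metis
  qed
  finally show ?thesis by (simp add: L_def)
qed

lemma sum_distinct_lists_by_length:
  fixes g :: "nat \<Rightarrow> nat"
  assumes X: "finite X"
  shows "(\<Sum>s\<in>{s. distinct s \<and> set s \<subseteq> X \<and> P (length s)}. g (length s))
       = (\<Sum>k\<le>card X. if P k then \<Prod>{card X - k + 1 .. card X} * g k else 0)"
proof -
  let ?S = "{s. distinct s \<and> set s \<subseteq> X \<and> P (length s)}"
  have "finite ?S" by (rule finite_subset[OF _ finite_subset_distinct[OF X]]) blast
  moreover have "length ` ?S \<subseteq> {..card X}"
    using X by (auto simp: distinct_card[symmetric] card_mono)
  ultimately have "(\<Sum>s\<in>?S. g (length s)) = (\<Sum>k\<le>card X. \<Sum>s\<in>{s \<in> ?S. length s = k}. g (length s))"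
    by (intro sum.group[symmetric]) simp_all
  also have "\<dots> = (\<Sum>k\<le>card X. if P k then \<Prod>{card X - k + 1 .. card X} * g k else 0)"
  proof (rule sum.cong[OF refl])
    fix k assume "k \<in> {..card X}"
    have "{s \<in> ?S. length s = k} = (if P k then {s. length s = k \<and> distinct s \<and> set s \<subseteq> X} else {})"
      by auto
    moreover have "(\<Sum>s\<in>{s. length s = k \<and> distinct s \<and> set s \<subseteq> X}. g (length s))
        = card {s. length s = k \<and> distinct s \<and> set s \<subseteq> X} * g k"
      by simp
    ultimately show "(\<Sum>s\<in>{s \<in> ?S. length s = k}. g (length s))
        = (if P k then \<Prod>{card X - k + 1 .. card X} * g k else 0)"
      using card_lists_distinct_length_eq[OF X] \<open>k \<in> {..card X}\<close> by simp
  qed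
  finally show ?thesis .
qed

lemma r_regular_perms_empty: "r_regular_perms r {} = {id}"
  by (auto simp: r_regular_perms_def)

text \<open>The recurrence chooses the cycle through a fixed point: its length k + 1 must not be divisible
  by r, there are m (m - 1) ... (m - k + 1) ways to fill it from the other m points, and the
  remaining m - k points carry an arbitrary regular permutation.\<close>

fun count_r_regular :: "nat \<Rightarrow> nat \<Rightarrow> nat" where
  "count_r_regular r 0 = 1"
| "count_r_regular r (Suc m) =
    (\<Sum>k\<le>m. if \<not> r dvd Suc k then \<Prod>{m - k + 1 .. m} * count_r_regular r (m - k) else 0)"

lemma card_r_regular_perms:
  "finite C \<Longrightarrow> card (r_regular_perms r C) = count_r_regular r (card C)"
proof (induction "card C" arbitrary: C rule: less_induct)
  case less
  show ?case
  proof (cases "card C")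
    case 0
    then have "C = {}" using less.prems by simp
    then show ?thesis by (simp add: r_regular_perms_empty)
  next
    case (Suc m)
    obtain a where a: "a \<in> C" using Suc by (metis card.empty ex_in_conv nat.distinct(1))
    have cX: "card (C - {a}) = m" using Suc less.prems a by simp
    let ?L = "{s. distinct s \<and> set s \<subseteq> C - {a} \<and> \<not> r dvd Suc (length s)}"
    have "card (r_regular_perms r C) = (\<Sum>s\<in>?L. card (r_regular_perms r (C - set (a # s))))"
      by (rule card_r_regular_perms_decompose[OF less.prems a])
    also have "\<dots> = (\<Sum>s\<in>?L. count_r_regular r (m - length s))"
    proof (rule sum.cong[OF refl])
      fix s assume s: "s \<in> ?L"
      have "C - set (a # s) = (C - {a}) - set s" by auto
      then have "card (C - set (a # s)) = m - length s"
        using s less.prems cX by (simp add: card_Diff_subset finite_subset distinct_card)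
      then show "card (r_regular_perms r (C - set (a # s))) = count_r_regular r (m - length s)"
        using less.hyps[of "C - set (a # s)"] less.prems Suc by simp
    qed
    also have "\<dots> = (\<Sum>k\<le>m. if \<not> r dvd Suc k then \<Prod>{m - k + 1 .. m} * count_r_regular r (m - k) else 0)"
      using sum_distinct_lists_by_length[where X = "C - {a}" and P = "\<lambda>k. \<not> r dvd Suc k"
          and g = "\<lambda>k. count_r_regular r (m - k)"] less.prems
      unfolding cX by simp
    also have "\<dots> = count_r_regular r (card C)" using Suc by simp
    finally show ?thesis .
  qed
qed

definition regular_ratio :: "nat \<Rightarrow> nat \<Rightarrow> real" where
  "regular_ratio r n = count_r_regular r n / fact n"

lemma regular_ratio_recurrence:
  "real n * regular_ratio r n = (\<Sum>j<n. if r dvd (n - j) then 0 else regular_ratio r j)"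
proof (cases n)
  case (Suc m)
  have summand: "real (if \<not> r dvd Suc k then \<Prod>{m - k + 1 .. m} * count_r_regular r (m - k) else 0) / fact m
      = (if \<not> r dvd Suc k then regular_ratio r (m - k) else 0)"
    if "k \<in> {..m}" for k
  proof -
    have "(fact m :: real) = fact (m - k) * real (\<Prod>{Suc (m - k)..m})"
      using arg_cong[OF fact_eq_fact_times[of "m - k" m], of real] that by (simp add: of_nat_fact)
    moreover have "real (\<Prod>{Suc (m - k)..m}) \<noteq> 0" by (simp add: prod_zero_iff)
    ultimately show ?thesis unfolding regular_ratio_def by (simp add: field_simps)
  qed
  have nz: "real (Suc m) \<noteq> 0" by (simp del: of_nat_Suc)
  have "real n * regular_ratio r n = real (count_r_regular r (Suc m)) / fact m"
    unfolding Suc regular_ratio_def fact_Suc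
    by (simp only: times_divide_eq_right nonzero_mult_divide_mult_cancel_left[OF nz])
  also have "\<dots> = (\<Sum>k\<le>m. if \<not> r dvd Suc k then regular_ratio r (m - k) else 0)"
    unfolding count_r_regular.simps of_nat_sum sum_divide_distrib
    by (rule sum.cong[OF refl summand])
  also have "\<dots> = (\<Sum>k<n. (\<lambda>j. if r dvd (n - j) then 0 else regular_ratio r j) (n - Suc k))"
    using Suc by (intro sum.cong) (auto simp: Suc_diff_Suc)
  also have "\<dots> = (\<Sum>j<n. if r dvd (n - j) then 0 else regular_ratio r j)"
    by (rule sum.nat_diff_reindex)
  finally show ?thesis .
qed simp

lemma regular_ratio_eq_prev:
  "\<not> r dvd n \<Longrightarrow> regular_ratio r n = regular_ratio r (n - 1)"
proof (induction n rule: less_induct)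
  case (less n)
  then obtain m where n: "n = Suc m" by (cases n) auto
  let ?c = "regular_ratio r"
  define Q where "Q k = (\<Sum>j<k. if r dvd (k - j) then ?c j else 0)" for k
  have rec: "real k * ?c k = (\<Sum>j<k. ?c j) - Q k" for k
  proof -
    have "real k * ?c k = (\<Sum>j<k. ?c j - (if r dvd (k - j) then ?c j else 0))"
      unfolding regular_ratio_recurrence by (rule sum.cong) auto
    then show ?thesis by (simp add: sum_subtractf Q_def)
  qed
  \<comment> \<open>Every term of \<open>Q n\<close> sits at an index \<open>j + 1\<close> not divisible by \<open>r\<close> (as \<open>r\<close> does not
    divide \<open>n\<close>), where the induction hypothesis shifts it down by one: \<open>Q n = Q (n - 1)\<close>.\<close>
  have "Q (Suc m) = (if r dvd (Suc m - 0) then ?c 0 else 0)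
      + (\<Sum>j<m. if r dvd (Suc m - Suc j) then ?c (Suc j) else 0)"
    unfolding Q_def by (rule sum.lessThan_Suc_shift)
  also have "\<dots> = (\<Sum>j<m. if r dvd (m - j) then ?c (Suc j) else 0)"
    using less.prems n by simp
  also have "\<dots> = Q m"
    unfolding Q_def
  proof (rule sum.cong[OF refl])
    fix j assume "j \<in> {..<m}"
    show "(if r dvd (m - j) then ?c (Suc j) else 0) = (if r dvd (m - j) then ?c j else 0)"
    proof (cases "r dvd (m - j)")
      case True
      have "Suc m = Suc j + (m - j)" using \<open>j \<in> {..<m}\<close> by simp
      then have "\<not> r dvd Suc j" using True less.prems n by (metis dvd_add_left_iff)
      then show ?thesis using less.IH[of "Suc j"] \<open>j \<in> {..<m}\<close> n True by simp
    qed simp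
  qed
  finally have "real (Suc m) * ?c (Suc m) = real (Suc m) * ?c m"
    using rec[of "Suc m"] rec[of m] by (simp add: algebra_simps)
  then show ?case using n by simp
qed

lemma count_r_regular_eq_mult:
  assumes "\<not> r dvd n"
  shows "count_r_regular r n = n * count_r_regular r (n - 1)"
proof -
  obtain m where n: "n = Suc m" using assms by (cases n) auto
  have "real (count_r_regular r n) = fact n * regular_ratio r n"
    by (simp add: regular_ratio_def del: count_r_regular.simps)
  also have "\<dots> = real n * (fact m * regular_ratio r m)"
    using regular_ratio_eq_prev[OF assms] n by (simp del: count_r_regular.simps of_nat_Suc)
  also have "fact m * regular_ratio r m = real (count_r_regular r m)"
    by (simp add: regular_ratio_def del: count_r_regular.simps)
  finally have "real (count_r_regular r n) = real (n * count_r_regular r m)"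
    by (simp only: of_nat_mult)
  then show ?thesis using n by (simp only: of_nat_eq_iff diff_Suc_1)
qed

section \<open>The power map of a monoid\<close>

lemma (in monoid) nat_pow_mod_exponent:
  fixes m k :: nat
  assumes "x \<in> carrier G" "x [^] m = \<one>"
  shows "x [^] k = x [^] (k mod m)"
proof -
  have "x [^] k = x [^] (m * (k div m) + k mod m)" by simp
  also have "\<dots> = (x [^] m) [^] (k div m) \<otimes> x [^] (k mod m)"
    by (simp only: nat_pow_pow[OF assms(1)] nat_pow_mult[OF assms(1)])
  also have "\<dots> = x [^] (k mod m)" using assms by simp
  finally show ?thesis .
qed

lemma (in monoid) in_power_image_if_coprime:
  fixes m :: nat
  assumes x: "x \<in> carrier G" and xm: "x [^] m = \<one>" and "coprime r m"
  shows "x \<in> power_image G r"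
proof -
  obtain s where "[r * s = Suc 0] (mod m)" using cong_solve_coprime_nat[OF assms(3)] ..
  then have rs: "r * s mod m = Suc 0 mod m" by (simp add: cong_def)
  have "(x [^] s) [^] r = x [^] (r * s)" using x by (simp add: nat_pow_pow mult.commute)
  also have "\<dots> = x [^] (r * s mod m)" by (rule nat_pow_mod_exponent[OF x xm])
  also have "\<dots> = x [^] (Suc 0 mod m)" by (simp only: rs)
  also have "\<dots> = x [^] Suc 0" by (rule nat_pow_mod_exponent[OF x xm, symmetric])
  also have "\<dots> = x" using x by simp
  finally have "x = (\<lambda>y. y [^] r) (x [^] s)" by simp
  then show ?thesis unfolding power_image_def by (rule image_eqI) (use x in simp)
qed

lemma card_power_image_eq_if_bij:
  assumes "monoid M" and bij: "bij_betw h (carrier M) (carrier N)"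
    and pow: "\<And>x. x \<in> carrier M \<Longrightarrow> h (x [^]\<^bsub>M\<^esub> r) = h x [^]\<^bsub>N\<^esub> r"
  shows "card (power_image N r) = card (power_image M r)"
proof -
  have "h ` power_image M r = (\<lambda>x. h x [^]\<^bsub>N\<^esub> r) ` carrier M"
    unfolding power_image_def image_image using pow by (rule image_cong[OF refl])
  also have "\<dots> = (\<lambda>y. y [^]\<^bsub>N\<^esub> r) ` h ` carrier M" by (simp add: image_image)
  also have "\<dots> = power_image N r"
    using bij unfolding bij_betw_def power_image_def by simp
  finally have "power_image N r = h ` power_image M r" ..
  moreover have "inj_on h (power_image M r)"
    using bij monoid.nat_pow_closed[OF assms(1)] unfolding power_image_def bij_betw_def
    by (auto intro: inj_on_subset)
  ultimately show ?thesis by (simp add: card_image)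
qed

section \<open>Wreath products over an arbitrary index set\<close>

text \<open>The points range over an arbitrary set A instead of {0..<n}, so that the restriction of an
  element to a set of points invariant under its permutation is again an element of a wreath
  product.\<close>

definition wreath_on :: "('a, 'b) monoid_scheme \<Rightarrow> 'i set \<Rightarrow> (('i \<Rightarrow> 'a) \<times> ('i \<Rightarrow> 'i)) monoid" where
  "wreath_on G A = \<lparr> carrier = {(f, p). f \<in> A \<rightarrow>\<^sub>E carrier G \<and> p permutes A},
     monoid.mult = (\<lambda>(f, p) (f', p'). ((\<lambda>i\<in>A. f i \<otimes>\<^bsub>G\<^esub> f' (inv_into UNIV p i)), p \<circ> p')),
     one = ((\<lambda>i\<in>A. \<one>\<^bsub>G\<^esub>), id) \<rparr>"

lemma wreath_eq_wreath_on: "wreath G n = wreath_on G {0..<n}"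
  unfolding wreath_def wreath_on_def by simp

lemma wreath_on_carrier_iff:
  "x \<in> carrier (wreath_on G A) \<longleftrightarrow> fst x \<in> A \<rightarrow>\<^sub>E carrier G \<and> snd x permutes A"
  by (cases x) (simp add: wreath_on_def)

lemma wreath_on_mult:
  "x \<otimes>\<^bsub>wreath_on G A\<^esub> y = ((\<lambda>i\<in>A. fst x i \<otimes>\<^bsub>G\<^esub> fst y (inv_into UNIV (snd x) i)), snd x \<circ> snd y)"
  by (cases x; cases y) (simp add: wreath_on_def)

lemma wreath_on_one: "\<one>\<^bsub>wreath_on G A\<^esub> = ((\<lambda>i\<in>A. \<one>\<^bsub>G\<^esub>), id)"
  by (simp add: wreath_on_def)

lemma snd_wreath_on_pow: "snd (x [^]\<^bsub>wreath_on G A\<^esub> (k::nat)) = snd x ^^ k"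
  by (induction k) (simp_all add: wreath_on_mult wreath_on_one fun_eq_iff funpow_swap1)

lemma finite_carrier_wreath_on:
  assumes "finite (carrier G)" "finite A"
  shows "finite (carrier (wreath_on G A))"
proof (rule finite_subset)
  show "carrier (wreath_on G A) \<subseteq> (A \<rightarrow>\<^sub>E carrier G) \<times> {p. p permutes A}"
    by (auto simp: wreath_on_carrier_iff)
  show "finite ((A \<rightarrow>\<^sub>E carrier G) \<times> {p. p permutes A})"
    using assms by (simp add: finite_PiE finite_permutations)
qed

lemma (in monoid) monoid_wreath_on: "monoid (wreath_on G A)"
proof
  fix x y assume x: "x \<in> carrier (wreath_on G A)" and y: "y \<in> carrier (wreath_on G A)"
  then show "x \<otimes>\<^bsub>wreath_on G A\<^esub> y \<in> carrier (wreath_on G A)"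
    by (auto simp: wreath_on_carrier_iff wreath_on_mult PiE_def Pi_def permutes_compose
        inv_into_permutes_in)
next
  fix x y z
  assume x: "x \<in> carrier (wreath_on G A)" and y: "y \<in> carrier (wreath_on G A)"
    and z: "z \<in> carrier (wreath_on G A)"
  have "inv_into UNIV (snd x \<circ> snd y) = inv_into UNIV (snd y) \<circ> inv_into UNIV (snd x)"
    using x y by (metis wreath_on_carrier_iff o_inv_distrib permutes_bij)
  then show "x \<otimes>\<^bsub>wreath_on G A\<^esub> y \<otimes>\<^bsub>wreath_on G A\<^esub> z
      = x \<otimes>\<^bsub>wreath_on G A\<^esub> (y \<otimes>\<^bsub>wreath_on G A\<^esub> z)"
    using x y z
    by (auto simp: wreath_on_carrier_iff wreath_on_mult m_assoc PiE_def Pi_def inv_into_permutes_in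
        intro!: ext)
next
  show "\<one>\<^bsub>wreath_on G A\<^esub> \<in> carrier (wreath_on G A)"
    by (simp add: wreath_on_one wreath_on_carrier_iff)
next
  fix x assume x: "x \<in> carrier (wreath_on G A)"
  then show "\<one>\<^bsub>wreath_on G A\<^esub> \<otimes>\<^bsub>wreath_on G A\<^esub> x = x"
    by (cases x) (auto simp: wreath_on_carrier_iff wreath_on_mult wreath_on_one PiE_def Pi_def
        extensional_def intro!: ext)
  show "x \<otimes>\<^bsub>wreath_on G A\<^esub> \<one>\<^bsub>wreath_on G A\<^esub> = x"
    using x by (cases x) (auto simp: wreath_on_carrier_iff wreath_on_mult wreath_on_one PiE_def
        Pi_def extensional_def inv_into_permutes_in intro!: ext)
qed

lemma wreath_on_base_pow:
  assumes "f \<in> C \<rightarrow>\<^sub>E carrier G"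
  shows "(f, id) [^]\<^bsub>wreath_on G C\<^esub> (k::nat) = ((\<lambda>i\<in>C. f i [^]\<^bsub>G\<^esub> k), id)"
proof (induction k)
  case 0
  then show ?case by (simp add: wreath_on_one restrict_def id_def)
next
  case (Suc k)
  then show ?case by (simp add: wreath_on_mult fun_eq_iff)
qed

definition wreath_res :: "'i set \<Rightarrow> ('i \<Rightarrow> 'a) \<times> ('i \<Rightarrow> 'i) \<Rightarrow> ('i \<Rightarrow> 'a) \<times> ('i \<Rightarrow> 'i)" where
  "wreath_res A x = (restrict (fst x) A, perm_restrict (snd x) A)"

definition wreath_glue ::
    "'i set \<Rightarrow> ('i \<Rightarrow> 'a) \<times> ('i \<Rightarrow> 'i) \<Rightarrow> ('i \<Rightarrow> 'a) \<times> ('i \<Rightarrow> 'i) \<Rightarrow> ('i \<Rightarrow> 'a) \<times> ('i \<Rightarrow> 'i)" where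
  "wreath_glue A z w = ((\<lambda>i. if i \<in> A then fst z i else fst w i), snd z \<circ> snd w)"

lemma wreath_res_carrier:
  assumes x: "x \<in> carrier (wreath_on G B)" and "A \<subseteq> B" "snd x ` A = A"
  shows "wreath_res A x \<in> carrier (wreath_on G A)"
proof -
  have f: "fst x \<in> B \<rightarrow>\<^sub>E carrier G" and p: "snd x permutes B"
    using x by (simp_all add: wreath_on_carrier_iff)
  have "restrict (fst x) A \<in> A \<rightarrow>\<^sub>E carrier G"
    unfolding restrict_PiE_iff using PiE_mem[OF f] assms(2) by blast
  moreover have "perm_restrict (snd x) A permutes A" by (rule perm_restrict_permutes[OF p assms(3)])
  ultimately show ?thesis by (simp add: wreath_on_carrier_iff wreath_res_def)
qed

lemma wreath_res_mult:
  assumes x: "x \<in> carrier (wreath_on G B)" and "A \<subseteq> B" "snd x ` A = A" "snd y ` A = A"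
  shows "wreath_res A (x \<otimes>\<^bsub>wreath_on G B\<^esub> y) = wreath_res A x \<otimes>\<^bsub>wreath_on G A\<^esub> wreath_res A y"
proof -
  have p: "snd x permutes B" using x by (simp add: wreath_on_carrier_iff)
  have "inv_into UNIV (snd x) i \<in> A" if "i \<in> A" for i
  proof -
    have "i \<in> snd x ` A" using that assms(3) by simp
    then obtain j where "j \<in> A" "i = snd x j" by blast
    then show ?thesis using permutes_inverses(2)[OF p] by simp
  qed
  then show ?thesis
    using assms(2,4) inv_into_perm_restrict[OF p assms(3)]
    by (auto simp: wreath_res_def wreath_on_mult perm_restrict_comp_invariant intro!: ext)
qed

lemma wreath_res_one: "A \<subseteq> B \<Longrightarrow> wreath_res A (\<one>\<^bsub>wreath_on G B\<^esub>) = \<one>\<^bsub>wreath_on G A\<^esub>"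
  by (auto simp: wreath_res_def wreath_on_one perm_restrict_def fun_eq_iff)

lemma (in monoid) wreath_res_pow:
  assumes x: "x \<in> carrier (wreath_on G B)" and "A \<subseteq> B" "snd x ` A = A"
  shows "wreath_res A (x [^]\<^bsub>wreath_on G B\<^esub> (k::nat)) = wreath_res A x [^]\<^bsub>wreath_on G A\<^esub> k"
proof (induction k)
  case 0
  then show ?case using assms(2) by (simp add: wreath_res_one)
next
  case (Suc k)
  have "x [^]\<^bsub>wreath_on G B\<^esub> k \<in> carrier (wreath_on G B)"
    using x by (simp add: monoid.nat_pow_closed monoid_wreath_on)
  moreover have "snd (x [^]\<^bsub>wreath_on G B\<^esub> k) ` A = A"
    using assms(3) by (simp add: snd_wreath_on_pow funpow_image_eq)
  ultimately show ?case using wreath_res_mult[OF _ assms(2) _ assms(3), of _ G] Suc by simp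
qed

lemma wreath_on_eqI:
  assumes x: "x \<in> carrier (wreath_on G B)" and y: "y \<in> carrier (wreath_on G B)"
    and "wreath_res A x = wreath_res A y" "wreath_res (B - A) x = wreath_res (B - A) y"
  shows "x = y"
proof -
  have "fst x i = fst y i \<and> snd x i = snd y i" for i
  proof (cases "i \<in> B")
    case True
    obtain S where S: "i \<in> S" "wreath_res S x = wreath_res S y"
      using True assms(3,4) by (cases "i \<in> A") auto
    then have "restrict (fst x) S i = restrict (fst y) S i"
      "perm_restrict (snd x) S i = perm_restrict (snd y) S i"
      by (simp_all add: wreath_res_def)
    then show ?thesis using S(1) by (simp add: perm_restrict_simps)
  next
    case False
    then show ?thesis
      using x y by (auto simp: wreath_on_carrier_iff PiE_def extensional_def permutes_not_in)
  qed
  then show ?thesis by (simp add: prod_eq_iff fun_eq_iff)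
qed

lemma wreath_glue_carrier:
  assumes z: "z \<in> carrier (wreath_on G A)" and w: "w \<in> carrier (wreath_on G C)"
  shows "wreath_glue A z w \<in> carrier (wreath_on G (A \<union> C))"
proof -
  have "fst z \<in> A \<rightarrow>\<^sub>E carrier G" "fst w \<in> C \<rightarrow>\<^sub>E carrier G"
    and "snd z permutes A" "snd w permutes C"
    using z w by (simp_all add: wreath_on_carrier_iff)
  then show ?thesis
    by (auto simp: wreath_on_carrier_iff wreath_glue_def PiE_iff extensional_def
        intro: permutes_compose permutes_subset)
qed

lemma
  assumes z: "z \<in> carrier (wreath_on G A)" and w: "w \<in> carrier (wreath_on G C)"
    and disj: "A \<inter> C = {}"
  shows wreath_res_glue_left: "wreath_res A (wreath_glue A z w) = z"
    and wreath_res_glue_right: "wreath_res C (wreath_glue A z w) = w"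
proof -
  have f: "fst z \<in> A \<rightarrow>\<^sub>E carrier G" "fst w \<in> C \<rightarrow>\<^sub>E carrier G"
    and p: "snd z permutes A" "snd w permutes C"
    using z w by (simp_all add: wreath_on_carrier_iff)
  have "restrict (fst (wreath_glue A z w)) A = fst z"
    using PiE_arb[OF f(1)] by (auto simp: wreath_glue_def fun_eq_iff)
  then show "wreath_res A (wreath_glue A z w) = z"
    by (simp add: wreath_res_def wreath_glue_def perm_restrict_comp_disjoint_left[OF p disj])
  have "restrict (fst (wreath_glue A z w)) C = fst w"
    using PiE_arb[OF f(2)] disj by (auto simp: wreath_glue_def fun_eq_iff)
  then show "wreath_res C (wreath_glue A z w) = w"
    by (simp add: wreath_res_def wreath_glue_def perm_restrict_comp_disjoint_right[OF p disj])
qed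

definition wreath_relabel :: "('i \<Rightarrow> 'i) \<Rightarrow> 'i set \<Rightarrow> ('i \<Rightarrow> 'a) \<times> ('i \<Rightarrow> 'i) \<Rightarrow> ('i \<Rightarrow> 'a) \<times> ('i \<Rightarrow> 'i)" where
  "wreath_relabel h A x = ((\<lambda>i\<in>h ` A. fst x (h i)), h \<circ> snd x \<circ> h)"

context
  fixes h :: "'i \<Rightarrow> 'i"
  assumes involution: "\<And>x. h (h x) = x"
begin

lemma involution_image_image: "h ` h ` A = A"
  by (simp add: image_comp comp_def involution)

lemma involution_mem_image_iff: "i \<in> h ` A \<longleftrightarrow> h i \<in> A"
  by (metis imageE imageI involution)

lemma involution_conj_permutes:
  assumes p: "p permutes A"
  shows "h \<circ> p \<circ> h permutes h ` A"
proof (rule bij_imp_permutes)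
  have ih: "inj h" by (metis involution injI)
  have "bij_betw h (h ` A) A" using involution_image_image[of A] ih
    by (metis bij_betw_imageI inj_on_subset subset_UNIV)
  moreover have "bij_betw p A A" using p by (rule permutes_imp_bij)
  moreover have "bij_betw h A (h ` A)" using ih by (metis bij_betw_imageI inj_on_subset subset_UNIV)
  ultimately have "bij_betw (h \<circ> (p \<circ> h)) (h ` A) (h ` A)"
    by (meson bij_betw_trans)
  then show "bij_betw (h \<circ> p \<circ> h) (h ` A) (h ` A)" by (simp add: o_assoc)
next
  fix x assume "x \<notin> h ` A"
  then show "(h \<circ> p \<circ> h) x = x" using p involution involution_mem_image_iff
    by (simp add: permutes_not_in)
qed

lemma inv_into_involution_conj:
  assumes "bij p"
  shows "inv_into UNIV (h \<circ> p \<circ> h) = h \<circ> inv_into UNIV p \<circ> h"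
proof (rule inv_unique_comp)
  show "(h \<circ> p \<circ> h) \<circ> (h \<circ> inv_into UNIV p \<circ> h) = id"
    using involution assms by (simp add: fun_eq_iff bij_is_surj surj_f_inv_f)
  show "(h \<circ> inv_into UNIV p \<circ> h) \<circ> (h \<circ> p \<circ> h) = id"
    using involution assms by (simp add: fun_eq_iff bij_is_inj inv_f_f)
qed

lemma wreath_relabel_carrier:
  assumes x: "x \<in> carrier (wreath_on G A)"
  shows "wreath_relabel h A x \<in> carrier (wreath_on G (h ` A))"
proof -
  have f: "fst x \<in> A \<rightarrow>\<^sub>E carrier G" and p: "snd x permutes A"
    using x by (simp_all add: wreath_on_carrier_iff)
  have "(\<lambda>i\<in>h ` A. fst x (h i)) \<in> h ` A \<rightarrow>\<^sub>E carrier G"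
    using PiE_mem[OF f] by (auto simp: involution_mem_image_iff)
  moreover have "h \<circ> snd x \<circ> h permutes h ` A" by (rule involution_conj_permutes[OF p])
  ultimately show ?thesis by (simp add: wreath_on_carrier_iff wreath_relabel_def)
qed

lemma wreath_relabel_mult:
  assumes x: "x \<in> carrier (wreath_on G A)"
  shows "wreath_relabel h A (x \<otimes>\<^bsub>wreath_on G A\<^esub> y)
    = wreath_relabel h A x \<otimes>\<^bsub>wreath_on G (h ` A)\<^esub> wreath_relabel h A y"
proof -
  have p: "snd x permutes A" using x by (simp add: wreath_on_carrier_iff)
  have inv: "inv_into UNIV (h \<circ> snd x \<circ> h) = h \<circ> inv_into UNIV (snd x) \<circ> h"
    using p by (simp add: inv_into_involution_conj permutes_bij)
  have "inv_into UNIV (snd x) (h i) \<in> A" if "i \<in> h ` A" for i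
    using that p by (simp add: involution_mem_image_iff inv_into_permutes_in)
  then have "h (inv_into UNIV (snd x) (h i)) \<in> h ` A" if "i \<in> h ` A" for i
    using that by blast
  then show ?thesis
    using involution inv by (auto simp: wreath_relabel_def wreath_on_mult involution_mem_image_iff
        fun_eq_iff)
qed

lemma wreath_relabel_one: "wreath_relabel h A (\<one>\<^bsub>wreath_on G A\<^esub>) = \<one>\<^bsub>wreath_on G (h ` A)\<^esub>"
  using involution
  by (auto simp: wreath_relabel_def wreath_on_one involution_mem_image_iff fun_eq_iff)

lemma wreath_relabel_relabel:
  assumes x: "x \<in> carrier (wreath_on G A)"
  shows "wreath_relabel h (h ` A) (wreath_relabel h A x) = x"
proof -
  have "fst x \<in> A \<rightarrow>\<^sub>E carrier G" using x by (simp add: wreath_on_carrier_iff)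
  then show ?thesis
    using involution
    by (auto simp: wreath_relabel_def involution_image_image PiE_def extensional_def prod_eq_iff
        fun_eq_iff)
qed

end

lemma (in monoid) wreath_relabel_pow:
  assumes involution: "\<And>x. h (h x) = x" and x: "x \<in> carrier (wreath_on G A)"
  shows "wreath_relabel h A (x [^]\<^bsub>wreath_on G A\<^esub> (k::nat)) = wreath_relabel h A x [^]\<^bsub>wreath_on G (h ` A)\<^esub> k"
proof (induction k)
  case 0
  then show ?case by (simp add: wreath_relabel_one[OF involution])
next
  case (Suc k)
  have "x [^]\<^bsub>wreath_on G A\<^esub> k \<in> carrier (wreath_on G A)"
    using x by (simp add: monoid.nat_pow_closed monoid_wreath_on)
  then show ?case using wreath_relabel_mult[OF involution, of "x [^]\<^bsub>wreath_on G A\<^esub> k" G A x] Suc by simp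
qed

lemma (in monoid) card_power_image_wreath_relabel:
  assumes involution: "\<And>x. h (h x) = x"
  shows "card (power_image (wreath_on G (h ` A)) r) = card (power_image (wreath_on G A) r)"
proof (rule card_power_image_eq_if_bij[OF monoid_wreath_on])
  have relabel_back: "wreath_relabel h (h ` A) y \<in> carrier (wreath_on G A)"
    "wreath_relabel h A (wreath_relabel h (h ` A) y) = y"
    if "y \<in> carrier (wreath_on G (h ` A))" for y
    using wreath_relabel_carrier[OF involution that] wreath_relabel_relabel[OF involution that]
    by (simp_all add: involution_image_image[OF involution])
  show "bij_betw (wreath_relabel h A) (carrier (wreath_on G A)) (carrier (wreath_on G (h ` A)))"
    by (rule bij_betw_byWitness[where f' = "wreath_relabel h (h ` A)"])
      (auto simp: wreath_relabel_relabel[OF involution] wreath_relabel_carrier[OF involution] relabel_back)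
qed (rule wreath_relabel_pow[OF involution])

section \<open>The r-th powers of the wreath product\<close>

locale wreath_rth_powers = group G for G :: "('a, 'b) monoid_scheme" (structure) +
  fixes r :: nat
  assumes finite_carrier: "finite (carrier G)"
    and prime_r: "prime r"
    and coprime_r: "coprime r (card (carrier G))"
begin

abbreviation rth_powers :: "'i set \<Rightarrow> (('i \<Rightarrow> 'a) \<times> ('i \<Rightarrow> 'i)) set" where
  "rth_powers B \<equiv> power_image (wreath_on G B) r"

lemma rth_powers_subset: "rth_powers B \<subseteq> carrier (wreath_on G B)"
  unfolding power_image_def using monoid.nat_pow_closed[OF monoid_wreath_on] by blast

lemma in_rth_powers_if_regular:
  assumes C: "finite C" and w: "w \<in> carrier (wreath_on G C)" and reg: "snd w \<in> r_regular_perms r C"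
  shows "w \<in> rth_powers C"
proof -
  \<comment> \<open>\<open>w ^ l\<close> has trivial permutation part, so \<open>w ^ (l * order G) = 1\<close> with \<open>l * order G\<close> prime to r.\<close>
  define l where "l = (\<Prod>i\<in>C. least_power (snd w) i)"
  have p: "snd w permutes C" using w by (simp add: wreath_on_carrier_iff)
  have "\<not> r dvd l"
    using reg C prime_r by (simp add: l_def r_regular_perms_def prime_dvd_prod_iff)
  then have cop: "coprime r (l * order G)"
    using prime_r coprime_r by (simp add: order_def prime_imp_coprime)
  define f where "f = fst (w [^]\<^bsub>wreath_on G C\<^esub> l)"
  have "w [^]\<^bsub>wreath_on G C\<^esub> l = (f, id)"
    using funpow_prod_least_power_eq_id[OF p C] by (simp add: f_def prod_eq_iff snd_wreath_on_pow l_def)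
  moreover have f: "f \<in> C \<rightarrow>\<^sub>E carrier G"
    using monoid.nat_pow_closed[OF monoid_wreath_on w, of l] by (simp add: wreath_on_carrier_iff f_def)
  ultimately have "w [^]\<^bsub>wreath_on G C\<^esub> (l * order G) = ((\<lambda>i\<in>C. f i [^] order G), id)"
    by (simp add: monoid.nat_pow_pow[OF monoid_wreath_on w, symmetric] wreath_on_base_pow)
  also have "\<dots> = \<one>\<^bsub>wreath_on G C\<^esub>"
    using PiE_mem[OF f] finite_carrier unfolding wreath_on_one
    by (intro arg_cong2[where f = Pair] restrict_ext) (simp_all add: pow_order_eq_1)
  finally show ?thesis
    by (rule monoid.in_power_image_if_coprime[OF monoid_wreath_on w _ cop])
qed

definition regular_elements :: "'i set \<Rightarrow> (('i \<Rightarrow> 'a) \<times> ('i \<Rightarrow> 'i)) set" where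
  "regular_elements C = {w \<in> carrier (wreath_on G C). snd w \<in> r_regular_perms r C}"

lemma regular_elements_subset_rth_powers: "finite C \<Longrightarrow> regular_elements C \<subseteq> rth_powers C"
  by (auto simp: regular_elements_def intro: in_rth_powers_if_regular)

lemma card_regular_elements:
  assumes "finite C"
  shows "card (regular_elements C) = card (carrier G) ^ card C * count_r_regular r (card C)"
proof -
  have "regular_elements C = (C \<rightarrow>\<^sub>E carrier G) \<times> r_regular_perms r C"
    by (auto simp: regular_elements_def r_regular_perms_def wreath_on_carrier_iff)
  then show ?thesis
    using assms by (simp add: card_cartesian_product card_PiE card_r_regular_perms)
qed

lemma res_Diff_dvd_cycle_points_regular:
  assumes x: "x \<in> carrier (wreath_on G B)" and B: "finite B"
  defines "T \<equiv> dvd_cycle_points r (snd x) B"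
  shows "wreath_res (B - T) x \<in> regular_elements (B - T)"
proof -
  have p: "snd x permutes B" using x by (simp add: wreath_on_carrier_iff)
  have pBT: "snd x ` (B - T) = B - T"
    using permutes_image_Diff[OF p permutes_image_dvd_cycle_points[OF p B]] by (simp add: T_def)
  have w: "wreath_res (B - T) x \<in> carrier (wreath_on G (B - T))"
    by (rule wreath_res_carrier[OF x Diff_subset pBT])
  then show ?thesis
    using pBT by (auto simp: regular_elements_def r_regular_perms_def wreath_on_carrier_iff wreath_res_def
        T_def dvd_cycle_points_def least_power_perm_restrict)
qed

lemma res_in_rth_powers_if_rth_power:
  assumes B: "finite B" and x: "x \<in> rth_powers B"
  shows "wreath_res (dvd_cycle_points r (snd x) B) x \<in> rth_powers (dvd_cycle_points r (snd x) B)"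
proof -
  obtain y where y: "y \<in> carrier (wreath_on G B)" and xy: "x = y [^]\<^bsub>wreath_on G B\<^esub> r"
    using x unfolding power_image_def by blast
  define T where "T = dvd_cycle_points r (snd x) B"
  have p: "snd y permutes B" using y by (simp add: wreath_on_carrier_iff)
  have "permutation (snd y)" using p B permutation_permutes by blast
  then have "T = {i\<in>B. r * r dvd least_power (snd y) i}"
    unfolding T_def dvd_cycle_points_def xy snd_wreath_on_pow
    by (simp add: prime_dvd_least_power_funpow_iff[OF _ prime_r])
  then have yT: "snd y ` T = T" using permutes_image_least_power_Collect[OF p B] by simp
  have TB: "T \<subseteq> B" unfolding T_def by (rule dvd_cycle_points_subset)
  have "wreath_res T x = wreath_res T y [^]\<^bsub>wreath_on G T\<^esub> r"
    unfolding xy by (rule wreath_res_pow[OF y TB yT])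
  moreover have "wreath_res T y \<in> carrier (wreath_on G T)" by (rule wreath_res_carrier[OF y TB yT])
  ultimately show ?thesis unfolding T_def[symmetric] power_image_def by (rule image_eqI)
qed

lemma in_rth_powers_if_res:
  assumes B: "finite B" and x: "x \<in> carrier (wreath_on G B)"
    and res: "wreath_res (dvd_cycle_points r (snd x) B) x \<in> rth_powers (dvd_cycle_points r (snd x) B)"
  shows "x \<in> rth_powers B"
proof -
  define T where "T = dvd_cycle_points r (snd x) B"
  have TB: "T \<subseteq> B" unfolding T_def by (rule dvd_cycle_points_subset)
  obtain z where z: "z \<in> carrier (wreath_on G T)" "wreath_res T x = z [^]\<^bsub>wreath_on G T\<^esub> r"
    using res unfolding T_def[symmetric] power_image_def by blast
  have "wreath_res (B - T) x \<in> rth_powers (B - T)"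
    using res_Diff_dvd_cycle_points_regular[OF x B] regular_elements_subset_rth_powers B
    unfolding T_def by blast
  then obtain v where v: "v \<in> carrier (wreath_on G (B - T))"
    "wreath_res (B - T) x = v [^]\<^bsub>wreath_on G (B - T)\<^esub> r"
    unfolding power_image_def by blast
  define y where "y = wreath_glue T z v"
  have disj: "T \<inter> (B - T) = {}" by blast
  have U: "T \<union> (B - T) = B" using TB by blast
  have y: "y \<in> carrier (wreath_on G B)"
    using wreath_glue_carrier[OF z(1) v(1)] unfolding U y_def .
  have zp: "snd z permutes T" and vp: "snd v permutes B - T"
    using z(1) v(1) by (simp_all add: wreath_on_carrier_iff)
  have yT: "snd y ` T = T" and yBT: "snd y ` (B - T) = B - T"
    using comp_disjoint_permutes_image_left[OF zp vp disj]
      comp_disjoint_permutes_image_right[OF zp vp disj] by (simp_all add: y_def wreath_glue_def)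
  have "y [^]\<^bsub>wreath_on G B\<^esub> r = x"
  proof (rule wreath_on_eqI[OF monoid.nat_pow_closed[OF monoid_wreath_on y] x])
    show "wreath_res T (y [^]\<^bsub>wreath_on G B\<^esub> r) = wreath_res T x"
      using wreath_res_pow[OF y TB yT] wreath_res_glue_left[OF z(1) v(1) disj] z(2) by (simp add: y_def)
    show "wreath_res (B - T) (y [^]\<^bsub>wreath_on G B\<^esub> r) = wreath_res (B - T) x"
      using wreath_res_pow[OF y Diff_subset yBT] wreath_res_glue_right[OF z(1) v(1) disj] v(2)
      by (simp add: y_def)
  qed
  then show ?thesis unfolding power_image_def using y by blast
qed

definition singular_rth_powers :: "'i set \<Rightarrow> (('i \<Rightarrow> 'a) \<times> ('i \<Rightarrow> 'i)) set" where
  "singular_rth_powers T = {z \<in> rth_powers T. dvd_cycle_points r (snd z) T = T}"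

lemma dvd_card_if_singular_rth_powers_ne:
  assumes "finite T" "singular_rth_powers T \<noteq> {}"
  shows "r dvd card T"
proof -
  obtain z where z: "z \<in> rth_powers T" "dvd_cycle_points r (snd z) T = T"
    using assms(2) by (auto simp: singular_rth_powers_def)
  then have "z \<in> carrier (wreath_on G T)" using rth_powers_subset by blast
  then have "snd z permutes T" by (simp add: wreath_on_carrier_iff)
  moreover have "\<forall>i\<in>T. r dvd least_power (snd z) i"
    using z(2) by (auto simp: dvd_cycle_points_def)
  ultimately show ?thesis using assms(1) dvd_card_if_dvd_least_power by blast
qed

lemma rth_power_decompose:
  assumes B: "finite B" and x: "x \<in> rth_powers B"
  defines "T \<equiv> dvd_cycle_points r (snd x) B"
  shows "wreath_res T x \<in> singular_rth_powers T"
    and "wreath_res (B - T) x \<in> regular_elements (B - T)"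
    and "wreath_glue T (wreath_res T x) (wreath_res (B - T) x) = x"
proof -
  have xc: "x \<in> carrier (wreath_on G B)" using x rth_powers_subset by blast
  have TB: "T \<subseteq> B" unfolding T_def by (rule dvd_cycle_points_subset)
  have p: "snd x permutes B" using xc by (simp add: wreath_on_carrier_iff)
  have pT: "snd x ` T = T" unfolding T_def by (rule permutes_image_dvd_cycle_points[OF p B])
  have z: "wreath_res T x \<in> carrier (wreath_on G T)" by (rule wreath_res_carrier[OF xc TB pT])
  have "dvd_cycle_points r (snd (wreath_res T x)) T = T"
    using pT by (auto simp: dvd_cycle_points_def wreath_res_def least_power_perm_restrict T_def)
  then show "wreath_res T x \<in> singular_rth_powers T"
    using res_in_rth_powers_if_rth_power[OF B x] by (simp add: singular_rth_powers_def T_def)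
  show w: "wreath_res (B - T) x \<in> regular_elements (B - T)"
    unfolding T_def by (rule res_Diff_dvd_cycle_points_regular[OF xc B])
  have disj: "T \<inter> (B - T) = {}" by blast
  have U: "T \<union> (B - T) = B" using TB by blast
  have wc: "wreath_res (B - T) x \<in> carrier (wreath_on G (B - T))"
    using w by (simp add: regular_elements_def)
  show "wreath_glue T (wreath_res T x) (wreath_res (B - T) x) = x"
    using wreath_glue_carrier[OF z wc] wreath_res_glue_left[OF z wc disj]
      wreath_res_glue_right[OF z wc disj]
    unfolding U by (intro wreath_on_eqI[OF _ xc, of _ T]) simp_all
qed

lemma wreath_glue_singular_regular:
  assumes B: "finite B" and TB: "T \<subseteq> B"
    and z: "z \<in> singular_rth_powers T" and w: "w \<in> regular_elements (B - T)"
  shows "dvd_cycle_points r (snd (wreath_glue T z w)) B = T"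
    and "wreath_glue T z w \<in> rth_powers B"
proof -
  have zc: "z \<in> carrier (wreath_on G T)" and wc: "w \<in> carrier (wreath_on G (B - T))"
    using z w rth_powers_subset by (auto simp: singular_rth_powers_def regular_elements_def)
  have zp: "snd z permutes T" and wp: "snd w permutes B - T"
    using zc wc by (simp_all add: wreath_on_carrier_iff)
  have disj: "T \<inter> (B - T) = {}" by blast
  have U: "T \<union> (B - T) = B" using TB by blast
  have "r dvd least_power (snd z \<circ> snd w) i \<longleftrightarrow> i \<in> T" if "i \<in> B" for i
  proof (cases "i \<in> T")
    case True
    then show ?thesis
      using least_power_comp_disjoint(1)[OF zp wp disj True] z
      by (auto simp: singular_rth_powers_def dvd_cycle_points_def)
  next
    case False
    then show ?thesis
      using least_power_comp_disjoint(2)[OF zp wp disj] w that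
      by (simp add: regular_elements_def r_regular_perms_def)
  qed
  then show T: "dvd_cycle_points r (snd (wreath_glue T z w)) B = T"
    using TB by (auto simp: dvd_cycle_points_def wreath_glue_def)
  have g: "wreath_glue T z w \<in> carrier (wreath_on G B)"
    using wreath_glue_carrier[OF zc wc] unfolding U .
  show "wreath_glue T z w \<in> rth_powers B"
    using in_rth_powers_if_res[OF B g] z wreath_res_glue_left[OF zc wc disj]
    by (simp add: T singular_rth_powers_def)
qed

lemma bij_betw_rth_powers_fibre:
  assumes B: "finite B" and TB: "T \<subseteq> B"
  shows "bij_betw (\<lambda>x. (wreath_res T x, wreath_res (B - T) x))
    {x \<in> rth_powers B. dvd_cycle_points r (snd x) B = T}
    (singular_rth_powers T \<times> regular_elements (B - T))"
proof (rule bij_betw_byWitness[where f' = "\<lambda>(z, w). wreath_glue T z w"])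
  have disj: "T \<inter> (B - T) = {}" by blast
  show "\<forall>x\<in>{x \<in> rth_powers B. dvd_cycle_points r (snd x) B = T}.
      (\<lambda>(z, w). wreath_glue T z w) (wreath_res T x, wreath_res (B - T) x) = x"
  proof
    fix x assume "x \<in> {x \<in> rth_powers B. dvd_cycle_points r (snd x) B = T}"
    then have x: "x \<in> rth_powers B" and T: "dvd_cycle_points r (snd x) B = T" by simp_all
    show "(\<lambda>(z, w). wreath_glue T z w) (wreath_res T x, wreath_res (B - T) x) = x"
      using rth_power_decompose(3)[OF B x] unfolding T by simp
  qed
  show "(\<lambda>x. (wreath_res T x, wreath_res (B - T) x)) ` {x \<in> rth_powers B. dvd_cycle_points r (snd x) B = T}
      \<subseteq> singular_rth_powers T \<times> regular_elements (B - T)"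
  proof
    fix y assume "y \<in> (\<lambda>x. (wreath_res T x, wreath_res (B - T) x)) `
      {x \<in> rth_powers B. dvd_cycle_points r (snd x) B = T}"
    then obtain x where x: "x \<in> rth_powers B" and T: "dvd_cycle_points r (snd x) B = T"
      and y: "y = (wreath_res T x, wreath_res (B - T) x)" by (elim imageE CollectE conjE)
    have "wreath_res T x \<in> singular_rth_powers T" "wreath_res (B - T) x \<in> regular_elements (B - T)"
      using rth_power_decompose(1,2)[OF B x] by (simp_all only: T)
    then show "y \<in> singular_rth_powers T \<times> regular_elements (B - T)" unfolding y by blast
  qed
  show "\<forall>y\<in>singular_rth_powers T \<times> regular_elements (B - T).
      (\<lambda>x. (wreath_res T x, wreath_res (B - T) x)) ((\<lambda>(z, w). wreath_glue T z w) y) = y"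
  proof
    fix y assume "y \<in> singular_rth_powers T \<times> regular_elements (B - T)"
    then obtain z w where y: "y = (z, w)" and "z \<in> rth_powers T"
      and w: "w \<in> carrier (wreath_on G (B - T))"
      by (auto simp: singular_rth_powers_def regular_elements_def)
    then have z: "z \<in> carrier (wreath_on G T)" using rth_powers_subset by blast
    show "(\<lambda>x. (wreath_res T x, wreath_res (B - T) x)) ((\<lambda>(z, w). wreath_glue T z w) y) = y"
      using wreath_res_glue_left[OF z w disj] wreath_res_glue_right[OF z w disj] by (simp add: y)
  qed
  show "(\<lambda>(z, w). wreath_glue T z w) ` (singular_rth_powers T \<times> regular_elements (B - T))
      \<subseteq> {x \<in> rth_powers B. dvd_cycle_points r (snd x) B = T}"
  proof
    fix x assume "x \<in> (\<lambda>(z, w). wreath_glue T z w) ` (singular_rth_powers T \<times> regular_elements (B - T))"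
    then obtain z w where "z \<in> singular_rth_powers T" "w \<in> regular_elements (B - T)"
      and x: "x = wreath_glue T z w" by auto
    then show "x \<in> {x \<in> rth_powers B. dvd_cycle_points r (snd x) B = T}"
      using wreath_glue_singular_regular[OF B TB] by simp
  qed
qed


end

lemma sum_Pow_card_Diff:
  fixes E :: "'i set \<Rightarrow> nat"
  assumes "finite N"
  shows "(\<Sum>T\<in>Pow N. card (N - T) * E T) = (\<Sum>j\<in>N. \<Sum>T\<in>Pow (N - {j}). E T)"
proof -
  have "(\<Sum>T\<in>Pow N. card (N - T) * E T) = (\<Sum>T\<in>Pow N. \<Sum>j\<in>{j\<in>N. j \<notin> T}. E T)"
    by (intro sum.cong) (simp_all add: set_diff_eq)
  also have "\<dots> = (\<Sum>j\<in>N. \<Sum>T\<in>{T\<in>Pow N. j \<notin> T}. E T)"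
    by (rule sum.swap_restrict) (simp_all add: assms)
  also have "\<dots> = (\<Sum>j\<in>N. \<Sum>T\<in>Pow (N - {j}). E T)"
    by (intro sum.cong) (auto simp: Pow_def)
  finally show ?thesis .
qed

context wreath_rth_powers
begin

lemma card_rth_powers_eq_sum:
  assumes B: "finite B"
  shows "card (rth_powers B) = (\<Sum>T\<in>Pow B. card (singular_rth_powers T)
    * (card (carrier G) ^ card (B - T) * count_r_regular r (card (B - T))))"
proof -
  define fibre where "fibre T = {x \<in> rth_powers B. dvd_cycle_points r (snd x) B = T}" for T
  have "rth_powers B = (\<Union>T\<in>Pow B. fibre T)"
  proof (intro equalityI subsetI)
    fix x assume "x \<in> rth_powers B"
    then have "x \<in> fibre (dvd_cycle_points r (snd x) B)"
      unfolding fibre_def mem_Collect_eq by (rule conjI[OF _ refl])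
    then show "x \<in> (\<Union>T\<in>Pow B. fibre T)" by (rule UN_I[rotated]) (simp add: dvd_cycle_points_subset)
  qed (unfold fibre_def, blast)
  then have "card (rth_powers B) = card (\<Union>T\<in>Pow B. fibre T)" by (rule arg_cong)
  also have "\<dots> = (\<Sum>T\<in>Pow B. card (fibre T))"
  proof (rule card_UN_disjoint)
    have "finite (rth_powers B)"
      using finite_carrier_wreath_on[OF finite_carrier B] rth_powers_subset by (rule finite_subset[rotated])
    moreover have "fibre T \<subseteq> rth_powers B" for T unfolding fibre_def by blast
    ultimately show "\<forall>T\<in>Pow B. finite (fibre T)" by (blast intro: finite_subset)
    show "\<forall>T\<in>Pow B. \<forall>T'\<in>Pow B. T \<noteq> T' \<longrightarrow> fibre T \<inter> fibre T' = {}"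
      unfolding fibre_def by blast
  qed (use B in simp)
  also have "\<dots> = (\<Sum>T\<in>Pow B. card (singular_rth_powers T) * card (regular_elements (B - T)))"
  proof (rule sum.cong[OF refl])
    fix T assume "T \<in> Pow B"
    then have "bij_betw (\<lambda>x. (wreath_res T x, wreath_res (B - T) x)) (fibre T)
        (singular_rth_powers T \<times> regular_elements (B - T))"
      unfolding fibre_def by (intro bij_betw_rth_powers_fibre[OF B]) blast
    then show "card (fibre T) = card (singular_rth_powers T) * card (regular_elements (B - T))"
      by (simp only: bij_betw_same_card card_cartesian_product)
  qed
  also have "\<dots> = (\<Sum>T\<in>Pow B. card (singular_rth_powers T)
      * (card (carrier G) ^ card (B - T) * count_r_regular r (card (B - T))))"
  proof (rule sum.cong[OF refl])
    fix T
    show "card (singular_rth_powers T) * card (regular_elements (B - T)) = card (singular_rth_powers T)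
      * (card (carrier G) ^ card (B - T) * count_r_regular r (card (B - T)))"
      using B by (simp only: card_regular_elements finite_Diff)
  qed
  finally show ?thesis .
qed


lemma card_rth_powers_eq_sum_remove:
  assumes N: "finite N" and nd: "\<not> r dvd card N"
  shows "card (rth_powers N) = card (carrier G) * (\<Sum>j\<in>N. card (rth_powers (N - {j})))"
proof -
  \<comment> \<open>A nonzero term has \<open>r dvd card T\<close>, hence \<open>r\<close> does not divide \<open>card (N - T)\<close> and the
    count of regular permutations splits off the factor \<open>card (N - T)\<close>, which is then absorbed
    by summing over the points \<open>j \<in> N - T\<close> instead.\<close>
  define g where "g = card (carrier G)"
  define E where "E T = card (singular_rth_powers T) * (g ^ (card (N - T) - 1) * count_r_regular r (card (N - T) - 1))" for T
  have "card (rth_powers N)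
      = (\<Sum>T\<in>Pow N. card (singular_rth_powers T) * (g ^ card (N - T) * count_r_regular r (card (N - T))))"
    unfolding g_def by (rule card_rth_powers_eq_sum[OF N])
  also have "\<dots> = (\<Sum>T\<in>Pow N. g * (card (N - T) * E T))"
  proof (rule sum.cong[OF refl])
    fix T assume "T \<in> Pow N"
    then have TN: "T \<subseteq> N" by simp
    show "card (singular_rth_powers T) * (g ^ card (N - T) * count_r_regular r (card (N - T)))
        = g * (card (N - T) * E T)"
    proof (cases "singular_rth_powers T = {}")
      case False
      have "card N = card T + card (N - T)"
        using N TN by (simp add: card_Diff_subset card_mono finite_subset)
      moreover have "r dvd card T"
        using False N TN by (intro dvd_card_if_singular_rth_powers_ne) (auto intro: finite_subset)
      ultimately have "\<not> r dvd card (N - T)" using nd by (metis dvd_add)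
      then obtain k where k: "card (N - T) = Suc k" by (cases "card (N - T)") auto
      show ?thesis
        using count_r_regular_eq_mult[OF \<open>\<not> r dvd card (N - T)\<close>]
        by (simp add: E_def k algebra_simps del: count_r_regular.simps)
    qed (simp add: E_def)
  qed
  also have "\<dots> = g * (\<Sum>T\<in>Pow N. card (N - T) * E T)" by (simp add: sum_distrib_left)
  also have "\<dots> = g * (\<Sum>j\<in>N. \<Sum>T\<in>Pow (N - {j}). E T)" by (simp only: sum_Pow_card_Diff[OF N])
  also have "\<dots> = g * (\<Sum>j\<in>N. card (rth_powers (N - {j})))"
  proof (intro arg_cong[where f = "(*) g"] sum.cong[OF refl])
    fix j assume j: "j \<in> N"
    have "card (N - {j} - T) = card (N - T) - 1" if "T \<in> Pow (N - {j})" for T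
    proof -
      have "N - {j} - T = (N - T) - {j}" "j \<in> N - T" using that j by auto
      then show ?thesis using N by (simp add: card_Diff_singleton)
    qed
    then show "(\<Sum>T\<in>Pow (N - {j}). E T) = card (rth_powers (N - {j}))"
      using card_rth_powers_eq_sum[of "N - {j}"] N by (simp add: E_def g_def)
  qed
  finally show ?thesis by (simp add: g_def)
qed

lemma card_rth_powers_Suc:
  assumes "\<not> r dvd Suc n"
  shows "card (rth_powers {0..<Suc n}) = card (carrier G) * Suc n * card (rth_powers {0..<n})"
proof -
  have "card (rth_powers ({0..<Suc n} - {j})) = card (rth_powers {0..<n})" if "j \<le> n" for j
  proof -
    have "Transposition.transpose j n ` ({0..<Suc n} - {j}) = {0..<n}"
      using that by (auto simp: Transposition.transpose_def image_iff)
    then show ?thesis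
      using card_power_image_wreath_relabel[of "Transposition.transpose j n" "{0..<Suc n} - {j}" r]
      by simp
  qed
  then show ?thesis
    using card_rth_powers_eq_sum_remove[of "{0..<Suc n}"] assms by (simp add: algebra_simps)
qed

end

lemma not_dvd_Suc_if_not_cong_minus_one:
  assumes "\<not> [int n = -1] (mod int r)"
  shows "\<not> r dvd Suc n"
proof
  assume "r dvd Suc n"
  then have "int r dvd int n - (-1)" by (metis add.commute diff_minus_eq_add int_dvd_int_iff of_nat_Suc)
  then show False using assms by (simp add: cong_iff_dvd_diff)
qed

lemma P_r_Suc_eq_if_card_power_image:
  assumes "card (carrier G) \<noteq> 0"
    and powers: "card (power_image (wreath G (Suc n)) r)
      = card (carrier G) * Suc n * card (power_image (wreath G n) r)"
  shows "P_r G r (n + 1) = P_r G r n"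
proof -
  define g where "g = real (card (carrier G))"
  define c where "c = real (card (power_image (wreath G n) r))"
  have "g * real (Suc n) \<noteq> 0" using assms(1) by (simp add: g_def)
  have "P_r G r (n + 1) = real (card (power_image (wreath G (Suc n)) r)) / (g ^ Suc n * fact (Suc n))"
    by (simp only: P_r_def g_def Suc_eq_plus1 of_nat_fact)
  also have "\<dots> = (g * real (Suc n) * c) / ((g * real (Suc n)) * (g ^ n * fact n))"
    by (simp only: powers of_nat_mult power_Suc fact_Suc g_def c_def mult_ac)
  also have "\<dots> = c / (g ^ n * fact n)"
    by (rule nonzero_mult_divide_mult_cancel_left[OF \<open>g * real (Suc n) \<noteq> 0\<close>])
  also have "\<dots> = P_r G r n" by (simp only: P_r_def c_def g_def of_nat_fact)
  finally show ?thesis .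
qed

theorem theorem5p6:
  fixes G :: "('a, 'b) monoid_scheme" and r n :: nat
  assumes "group G" and "finite (carrier G)"
    and "prime r" and "coprime r (card (carrier G))"
    and "\<not> [int n = -1] (mod int r)"
  shows "P_r G r (n + 1) = P_r G r n"
proof (rule P_r_Suc_eq_if_card_power_image)
  interpret wreath_rth_powers G r
    using assms(1-4) by (simp add: wreath_rth_powers_def wreath_rth_powers_axioms_def)
  show "card (carrier G) \<noteq> 0" using assms(2) by (auto simp: card_eq_0_iff)
  show "card (power_image (wreath G (Suc n)) r) = card (carrier G) * Suc n * card (power_image (wreath G n) r)"
    using card_rth_powers_Suc[OF not_dvd_Suc_if_not_cong_minus_one[OF assms(5)]]
    by (simp add: wreath_eq_wreath_on)
qed

end
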